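(* Define $f:\mathbb{N}\to\mathbb{N}$ by $f(n)=n$ if $n$ is even and $f(n)=\frac{n+1}{2}$ if $n$ is odd, and let $f^{\downarrow}(n)$ be the first even value in the sequence $n, f(n), f(f(n)), \dots$ (obtained by applying $f$ repeatedly until the result is even). Then every fence of even cardinality is locally unsymmetric, and every (upper or lower) fence of odd cardinality $n\ge3$ is retractable to the $f^{\downarrow}(n)$-fence.
   Context: An $n$-fence is a poset of $n$ elements $a_1,\dots,a_n$ whose order is generated by alternating relations $a_1<a_2>a_3<\cdots a_n$ (lower fence) or $a_1>a_2<a_3>\cdots a_n$ (upper fence); for even $n$ these coincide up to isomorphism. Notation: $\ell(X)$ is the cardinality of a longest chain of a poset $X$. A subset $A$ of a poset $X$ is maximally ordered in $X$ if $|\{(a,b)\in A\times A:a<b\}|$ is maximal among subsets of $X$ of cardinality $|A|$. For $\sigma\in\mathrm{Aut}(P)$, $\Sigma(\sigma)=\{a:\sigma(a)\ne a\}$. For finite $Q$ and $r\ge2$: $\sigma\in\mathrm{Aut}(P)$ is a $(Q,r)$-generator if there exist subsets $S_0,\dots,S_{r-1}\subset\Sigma(\sigma)$, each isomorphic to $Q$, which are smallest maximally ordered subsets of $\Sigma(\sigma)$ with $\sigma(S_i)=S_{(i+1)\bmod r}$, $\ell(S_i)=\ell(\Sigma(\sigma))$, $\bigcup_iS_i=\Sigma(\sigma)$; distinct $S_i,S_j$ are $(Q,r)$-symmetric subsets. Elements $a,b$ are $(Q,r,0)$-symmetric if $a=b$; $(Q,r,1)$-symmetric if there are $(Q,r)$-symmetric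 subsets $A,B$ with generator $\sigma$, $a\in A$, $b=\sigma^q(a)\in B$, $1\le q<r$; for $n\ge2$, $(Q,r,n)$-symmetric if not $(Q,r,j)$-symmetric for $j<n$ but there exist $c$, $j<n$ with $a$ $(Q,r,j)$-symmetric to $c$ and $c$ $(Q,r,n-j)$-symmetric to $b$; $(Q,r)$-symmetric if $(Q,r,n)$-symmetric for some $n\ge0$ (an equivalence relation). $P\oslash_rQ$ is the quotient poset of equivalence classes with $E\le F$ iff some $e\in E$, $f\in F$ satisfy $e\le f$. $P$ is locally symmetric if $P\oslash_rQ\not\cong P$ for some finite $Q$ and $r\ge2$, and locally unsymmetric otherwise. $P$ is retractable to $\tilde P$ if there is a sequence of pairs $(Q_1,r_1),(Q_2,r_2),\dots$ with $\tilde P\cong(\cdots((P\oslash_{r_1}Q_1)\oslash_{r_2}Q_2)\cdots)$ and $\tilde P\not\cong P$. *)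

theory Defs
  imports Main
begin

definition is_poset :: "'a set \<Rightarrow> ('a \<Rightarrow> 'a \<Rightarrow> bool) \<Rightarrow> bool" where
  "is_poset X le \<longleftrightarrow> (\<forall>x\<in>X. le x x) \<and> (\<forall>x\<in>X. \<forall>y\<in>X. le x y \<and> le y x \<longrightarrow> x = y)
     \<and> (\<forall>x\<in>X. \<forall>y\<in>X. \<forall>z\<in>X. le x y \<and> le y z \<longrightarrow> le x z)"

definition poset_iso :: "'a set \<Rightarrow> ('a \<Rightarrow> 'a \<Rightarrow> bool) \<Rightarrow> 'b set \<Rightarrow> ('b \<Rightarrow> 'b \<Rightarrow> bool) \<Rightarrow> bool" where
  "poset_iso X le Y le' \<longleftrightarrow> (\<exists>h. bij_betw h X Y \<and> (\<forall>a\<in>X. \<forall>b\<in>X. le a b \<longleftrightarrow> le' (h a) (h b)))"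

definition is_aut :: "'a set \<Rightarrow> ('a \<Rightarrow> 'a \<Rightarrow> bool) \<Rightarrow> ('a \<Rightarrow> 'a) \<Rightarrow> bool" where
  "is_aut X le \<sigma> \<longleftrightarrow> bij_betw \<sigma> X X \<and> (\<forall>a\<in>X. \<forall>b\<in>X. le a b \<longleftrightarrow> le (\<sigma> a) (\<sigma> b))"

definition moved :: "'a set \<Rightarrow> ('a \<Rightarrow> 'a) \<Rightarrow> 'a set" where
  "moved X \<sigma> = {a \<in> X. \<sigma> a \<noteq> a}"

definition is_chain :: "('a \<Rightarrow> 'a \<Rightarrow> bool) \<Rightarrow> 'a set \<Rightarrow> bool" where
  "is_chain le C \<longleftrightarrow> (\<forall>a\<in>C. \<forall>b\<in>C. le a b \<or> le b a)"

definition longest_chain :: "('a \<Rightarrow> 'a \<Rightarrow> bool) \<Rightarrow> 'a set \<Rightarrow> nat" where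
  "longest_chain le Y = Max {card C | C. C \<subseteq> Y \<and> is_chain le C}"

definition ord_pairs :: "('a \<Rightarrow> 'a \<Rightarrow> bool) \<Rightarrow> 'a set \<Rightarrow> nat" where
  "ord_pairs le A = card {(a, b). a \<in> A \<and> b \<in> A \<and> le a b \<and> a \<noteq> b}"

definition max_ordered :: "('a \<Rightarrow> 'a \<Rightarrow> bool) \<Rightarrow> 'a set \<Rightarrow> 'a set \<Rightarrow> bool" where
  "max_ordered le Z A \<longleftrightarrow> A \<subseteq> Z \<and>
     (\<forall>B. B \<subseteq> Z \<and> card B = card A \<longrightarrow> ord_pairs le B \<le> ord_pairs le A)"

definition gen_family :: "'a set \<Rightarrow> ('a \<Rightarrow> 'a \<Rightarrow> bool) \<Rightarrow> ('a \<Rightarrow> 'a) \<Rightarrow> nat \<Rightarrow> (nat \<Rightarrow> 'a set) \<Rightarrow> nat \<Rightarrow> bool" where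
  "gen_family X le \<sigma> r S k \<longleftrightarrow>
     (\<forall>i<r. max_ordered le (moved X \<sigma>) (S i) \<and> card (S i) = k
            \<and> \<sigma> ` (S i) = S ((i + 1) mod r)
            \<and> longest_chain le (S i) = longest_chain le (moved X \<sigma>))
     \<and> (\<Union>i<r. S i) = moved X \<sigma>"

definition is_generator :: "'a set \<Rightarrow> ('a \<Rightarrow> 'a \<Rightarrow> bool) \<Rightarrow> 'b set \<Rightarrow> ('b \<Rightarrow> 'b \<Rightarrow> bool)
    \<Rightarrow> nat \<Rightarrow> ('a \<Rightarrow> 'a) \<Rightarrow> (nat \<Rightarrow> 'a set) \<Rightarrow> bool" where
  "is_generator X le Q leQ r \<sigma> S \<longleftrightarrow>
     is_aut X le \<sigma> \<and> 2 \<le> r \<and> gen_family X le \<sigma> r S (card Q)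
     \<and> (\<forall>i<r. poset_iso (S i) le Q leQ)
     \<and> (\<forall>k T. gen_family X le \<sigma> r T k \<longrightarrow> card Q \<le> k)"

definition sym1 :: "'a set \<Rightarrow> ('a \<Rightarrow> 'a \<Rightarrow> bool) \<Rightarrow> 'b set \<Rightarrow> ('b \<Rightarrow> 'b \<Rightarrow> bool) \<Rightarrow> nat
    \<Rightarrow> 'a \<Rightarrow> 'a \<Rightarrow> bool" where
  "sym1 X le Q leQ r a b \<longleftrightarrow>
     (\<exists>\<sigma> S i j q. is_generator X le Q leQ r \<sigma> S \<and> i < r \<and> j < r \<and> S i \<noteq> S j
        \<and> a \<in> S i \<and> 1 \<le> q \<and> q < r \<and> b = (\<sigma> ^^ q) a \<and> b \<in> S j)"

text \<open>(Q,r)-symmetry: (Q,r,n)-symmetric for some n, i.e. reachable by a chain of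
  (Q,r,1)-steps (n = 0 is equality).\<close>
definition qsym :: "'a set \<Rightarrow> ('a \<Rightarrow> 'a \<Rightarrow> bool) \<Rightarrow> 'b set \<Rightarrow> ('b \<Rightarrow> 'b \<Rightarrow> bool) \<Rightarrow> nat
    \<Rightarrow> 'a \<Rightarrow> 'a \<Rightarrow> bool" where
  "qsym X le Q leQ r = (sym1 X le Q leQ r)\<^sup>*\<^sup>*"

definition quot_carrier :: "'a set \<Rightarrow> ('a \<Rightarrow> 'a \<Rightarrow> bool) \<Rightarrow> 'b set \<Rightarrow> ('b \<Rightarrow> 'b \<Rightarrow> bool) \<Rightarrow> nat
    \<Rightarrow> 'a set set" where
  "quot_carrier X le Q leQ r = (\<lambda>a. {b \<in> X. qsym X le Q leQ r a b}) ` X"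

definition quot_le :: "('a \<Rightarrow> 'a \<Rightarrow> bool) \<Rightarrow> 'a set \<Rightarrow> 'a set \<Rightarrow> bool" where
  "quot_le le E F \<longleftrightarrow> (\<exists>e\<in>E. \<exists>f\<in>F. le e f)"

text \<open>Local symmetry. Finite posets Q are taken up to isomorphism, represented on nat.\<close>
definition locally_symmetric :: "'a set \<Rightarrow> ('a \<Rightarrow> 'a \<Rightarrow> bool) \<Rightarrow> bool" where
  "locally_symmetric X le \<longleftrightarrow>
     (\<exists>(Q :: nat set) leQ r. finite Q \<and> is_poset Q leQ \<and> 2 \<le> r \<and>
        \<not> poset_iso (quot_carrier X le Q leQ r) (quot_le le) X le)"

definition retract_step :: "nat set \<times> (nat \<Rightarrow> nat \<Rightarrow> bool) \<Rightarrow> nat set \<times> (nat \<Rightarrow> nat \<Rightarrow> bool) \<Rightarrow> bool" where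
  "retract_step P P' \<longleftrightarrow>
     (\<exists>(Q :: nat set) leQ r. finite Q \<and> is_poset Q leQ \<and> 2 \<le> r \<and>
        poset_iso (quot_carrier (fst P) (snd P) Q leQ r) (quot_le (snd P)) (fst P') (snd P'))"

definition retractable :: "nat set \<times> (nat \<Rightarrow> nat \<Rightarrow> bool) \<Rightarrow> nat set \<times> (nat \<Rightarrow> nat \<Rightarrow> bool) \<Rightarrow> bool" where
  "retractable P T \<longleftrightarrow> retract_step\<^sup>+\<^sup>+ P T \<and> \<not> poset_iso (fst P) (snd P) (fst T) (snd T)"

text \<open>n-fence on {1..n}: lower fence (lower = True) a_1 < a_2 > a_3 < ..., upper fence
  (lower = False) a_1 > a_2 < a_3 > ...; order generated by the covering relations.\<close>
definition fence_cover :: "bool \<Rightarrow> nat \<Rightarrow> nat \<Rightarrow> nat \<Rightarrow> bool" where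
  "fence_cover lower n i j \<longleftrightarrow> i \<in> {1..n} \<and> j \<in> {1..n} \<and> (j = i + 1 \<or> i = j + 1)
     \<and> (odd i \<longleftrightarrow> lower)"

definition fence_le :: "bool \<Rightarrow> nat \<Rightarrow> nat \<Rightarrow> nat \<Rightarrow> bool" where
  "fence_le lower n = (fence_cover lower n)\<^sup>*\<^sup>*"

definition fence :: "bool \<Rightarrow> nat \<Rightarrow> nat set \<times> (nat \<Rightarrow> nat \<Rightarrow> bool)" where
  "fence lower n = ({1..n}, fence_le lower n)"

definition fstep :: "nat \<Rightarrow> nat" where
  "fstep n = (if even n then n else (n + 1) div 2)"

definition fdown :: "nat \<Rightarrow> nat" where
  "fdown n = (fstep ^^ (LEAST k. even ((fstep ^^ k) n))) n"

end

theory Submission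
  imports Defs
begin

text \<open>An automorphism of a fence preserves comparability, i.e. adjacency on the underlying
  path, so it is the identity or the reflection \<open>i \<mapsto> n + 1 - i\<close>. For even \<open>n\<close> the
  reflection exchanges minimal and maximal elements, so the fence is rigid: no two distinct
  elements are symmetric and every quotient is the fence itself. For odd \<open>n = 2k + 1\<close> the
  reflection is an automorphism fixing only the middle element \<open>k + 1\<close>; the halves
  \<open>{1..k}\<close> and \<open>{k+2..n}\<close> form a smallest generating family with \<open>r = 2\<close>, and identifying
  every element with its mirror image folds the fence onto the \<open>(k + 1)\<close>-fence. Iterating
  the fold \<open>n \<mapsto> (n + 1) div 2\<close> ends at the \<open>f\<^sup>\<down>(n)\<close>-fence, and once the size is even the
  orientation of the fence no longer matters.\<close>

section \<open>Isomorphisms, automorphisms and symmetric elements\<close>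

lemma poset_iso_refl: "poset_iso X le X le"
  unfolding poset_iso_def by (intro exI[of _ id]) auto

lemma poset_iso_sym:
  assumes "poset_iso X le Y le'"
  shows "poset_iso Y le' X le"
proof -
  obtain h where h: "bij_betw h X Y" and ord: "\<forall>a\<in>X. \<forall>b\<in>X. le a b \<longleftrightarrow> le' (h a) (h b)"
    using assms unfolding poset_iso_def by blast
  have "le' a b \<longleftrightarrow> le (inv_into X h a) (inv_into X h b)" if "a \<in> Y" "b \<in> Y" for a b
    using ord bij_betwE[OF bij_betw_inv_into[OF h]] bij_betw_inv_into_right[OF h] that by metis
  with bij_betw_inv_into[OF h] show ?thesis unfolding poset_iso_def by blast
qed

lemma poset_iso_trans:
  assumes "poset_iso X le Y le'" and "poset_iso Y le' Z le''"
  shows "poset_iso X le Z le''"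
proof -
  obtain h where h: "bij_betw h X Y" and ord: "\<forall>a\<in>X. \<forall>b\<in>X. le a b \<longleftrightarrow> le' (h a) (h b)"
    using assms(1) unfolding poset_iso_def by blast
  obtain g where g: "bij_betw g Y Z" and ord': "\<forall>a\<in>Y. \<forall>b\<in>Y. le' a b \<longleftrightarrow> le'' (g a) (g b)"
    using assms(2) unfolding poset_iso_def by blast
  have "le a b \<longleftrightarrow> le'' ((g \<circ> h) a) ((g \<circ> h) b)" if "a \<in> X" "b \<in> X" for a b
    using ord ord' bij_betwE[OF h] that by simp
  with bij_betw_trans[OF h g] show ?thesis unfolding poset_iso_def by blast
qed

lemma poset_iso_card_eq:
  assumes "poset_iso X le Y le'"
  shows "card X = card Y"
  using assms bij_betw_same_card unfolding poset_iso_def by blast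

lemma poset_iso_aut_image:
  assumes "is_aut X le \<sigma>" "A \<subseteq> X"
  shows "poset_iso A le (\<sigma> ` A) le"
  unfolding poset_iso_def
proof (intro exI conjI)
  show "bij_betw \<sigma> A (\<sigma> ` A)"
    using assms bij_betw_subset unfolding is_aut_def by blast
  show "\<forall>a\<in>A. \<forall>b\<in>A. le a b \<longleftrightarrow> le (\<sigma> a) (\<sigma> b)"
    using assms unfolding is_aut_def by blast
qed

lemma sym1_moved:
  assumes "sym1 X le Q leQ r a b"
  obtains \<sigma> q where "is_aut X le \<sigma>" "a \<in> moved X \<sigma>" "1 \<le> q" "q < r" "b = (\<sigma> ^^ q) a"
proof -
  obtain \<sigma> S i q where gen: "is_generator X le Q leQ r \<sigma> S" and "i < r" "a \<in> S i"
    and q: "1 \<le> q" "q < r" "b = (\<sigma> ^^ q) a"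
    using assms unfolding sym1_def by blast
  then have "S i \<subseteq> moved X \<sigma>"
    unfolding is_generator_def gen_family_def max_ordered_def by blast
  with gen \<open>a \<in> S i\<close> q that show ?thesis unfolding is_generator_def by blast
qed

lemma not_locally_symmetric_if_rigid:
  assumes rigid: "\<And>\<sigma> a. is_aut X le \<sigma> \<Longrightarrow> a \<in> X \<Longrightarrow> \<sigma> a = a"
  shows "\<not> locally_symmetric X le"
proof -
  have "\<not> sym1 X le Q leQ r a b" for Q :: "'b set" and leQ r a b
  proof
    assume "sym1 X le Q leQ r a b"
    then show False by (rule sym1_moved) (auto simp: moved_def dest: rigid)
  qed
  then have qsym_eq: "qsym X le Q leQ r a b \<longleftrightarrow> a = b" for Q :: "'b set" and leQ r a b
    unfolding qsym_def by (metis converse_rtranclpE rtranclp.rtrancl_refl)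
  have "poset_iso (quot_carrier X le Q leQ r) (quot_le le) X le" for Q :: "nat set" and leQ r
  proof -
    have "quot_carrier X le Q leQ r = (\<lambda>a. {a}) ` X"
      unfolding quot_carrier_def qsym_eq by auto
    moreover have "bij_betw (\<lambda>a. {a}) X ((\<lambda>a. {a}) ` X)"
      by (rule bij_betw_imageI) (auto simp: inj_on_def)
    ultimately have "poset_iso X le (quot_carrier X le Q leQ r) (quot_le le)"
      unfolding poset_iso_def quot_le_def by auto
    then show ?thesis by (rule poset_iso_sym)
  qed
  then show ?thesis unfolding locally_symmetric_def by blast
qed

lemma rtranclp_graph_involution:
  assumes R: "\<And>a b. R a b \<longleftrightarrow> a \<in> D \<and> b = f a"
    and f: "\<And>a. a \<in> D \<Longrightarrow> f a \<in> D" "\<And>a. a \<in> D \<Longrightarrow> f (f a) = a"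
  shows "R\<^sup>*\<^sup>* a b \<longleftrightarrow> b = a \<or> (a \<in> D \<and> b = f a)"
proof
  assume "R\<^sup>*\<^sup>* a b"
  then show "b = a \<or> (a \<in> D \<and> b = f a)"
    by (induction rule: rtranclp_induct) (auto simp: R f)
qed (auto simp: R)

section \<open>Automorphisms of fences\<close>

text \<open>A fence has height two: the upper end of a covering pair never starts another one, so
  the reflexive-transitive closure adds nothing but the diagonal.\<close>
lemma fence_le_iff:
  "fence_le lower n a b \<longleftrightarrow>
     a = b \<or> (a \<in> {1..n} \<and> b \<in> {1..n} \<and> (b = a + 1 \<or> a = b + 1) \<and> (odd a \<longleftrightarrow> lower))"
proof
  assume "fence_le lower n a b"
  then show "a = b \<or> (a \<in> {1..n} \<and> b \<in> {1..n} \<and> (b = a + 1 \<or> a = b + 1) \<and> (odd a \<longleftrightarrow> lower))"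
    unfolding fence_le_def
    by (induction rule: rtranclp_induct) (auto simp: fence_cover_def)
qed (auto simp: fence_le_def fence_cover_def)

lemma is_poset_fence_le: "is_poset Q (fence_le lower n)"
  unfolding is_poset_def by (auto simp: fence_le_iff)

definition adjacent :: "nat \<Rightarrow> nat \<Rightarrow> bool" where
  "adjacent a b \<longleftrightarrow> b = a + 1 \<or> a = b + 1"

abbreviation reflect :: "nat \<Rightarrow> nat \<Rightarrow> nat" where
  "reflect n a \<equiv> n + 1 - a"

lemma bij_betw_reflect: "bij_betw (reflect n) {1..n} {1..n}"
  by (rule bij_betw_byWitness[where f' = "reflect n"]) auto

lemma path_aut_fixing_1:
  assumes bij: "bij_betw \<sigma> {1..n} {1..n}"
    and adj: "\<forall>a\<in>{1..n}. \<forall>b\<in>{1..n}. adjacent (\<sigma> a) (\<sigma> b) \<longleftrightarrow> adjacent a b"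
    and "\<sigma> 1 = 1" and "i \<in> {1..n}"
  shows "\<sigma> i = i"
  using \<open>i \<in> {1..n}\<close>
proof (induction i rule: less_induct)
  case (less i)
  show ?case
  proof (cases "i = 1")
    case True
    with \<open>\<sigma> 1 = 1\<close> show ?thesis by simp
  next
    case False
    with less.prems have prev: "i - 1 \<in> {1..n}" "\<sigma> (i - 1) = i - 1"
      using less.IH by auto
    have "adjacent (\<sigma> (i - 1)) (\<sigma> i)"
      using adj prev(1) less.prems False by (auto simp: adjacent_def)
    with prev(2) less.prems have "\<sigma> i = i \<or> \<sigma> i = i - 2" by (auto simp: adjacent_def)
    moreover have "\<sigma> i \<noteq> i - 2"
    proof
      assume eq: "\<sigma> i = i - 2"
      then have "i - 2 \<in> {1..n}" using bij_betwE[OF bij] less.prems by fastforce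
      then have "\<sigma> (i - 2) = \<sigma> i" using less.IH eq by auto
      then have "i - 2 = i"
        using inj_onD[OF bij_betw_imp_inj_on[OF bij]] \<open>i - 2 \<in> {1..n}\<close> less.prems by blast
      with less.prems show False by auto
    qed
    ultimately show ?thesis by blast
  qed
qed

text \<open>Vertex 1 has a single neighbour, whereas every inner vertex of the path has two.\<close>
lemma path_aut_endpoint:
  assumes bij: "bij_betw \<sigma> {1..n} {1..n}"
    and adj: "\<forall>a\<in>{1..n}. \<forall>b\<in>{1..n}. adjacent (\<sigma> a) (\<sigma> b) \<longleftrightarrow> adjacent a b"
    and "1 \<le> n"
  shows "\<sigma> 1 = 1 \<or> \<sigma> 1 = n"
proof (rule ccontr)
  assume not_end: "\<not> ?thesis"
  moreover have "\<sigma> 1 \<in> {1..n}" using bij_betwE[OF bij] \<open>1 \<le> n\<close> by simp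
  ultimately have "\<sigma> 1 - 1 \<in> \<sigma> ` {1..n}" "\<sigma> 1 + 1 \<in> \<sigma> ` {1..n}"
    using bij_betw_imp_surj_on[OF bij] by auto
  then obtain u v where u: "u \<in> {1..n}" "\<sigma> u = \<sigma> 1 - 1" and v: "v \<in> {1..n}" "\<sigma> v = \<sigma> 1 + 1"
    by (metis imageE)
  have "adjacent (\<sigma> 1) (\<sigma> u)" "adjacent (\<sigma> 1) (\<sigma> v)"
    using u v not_end \<open>\<sigma> 1 \<in> {1..n}\<close> by (auto simp: adjacent_def)
  moreover have "1 \<in> {1..n}" using \<open>1 \<le> n\<close> by simp
  ultimately have "adjacent 1 u" "adjacent 1 v" using adj u(1) v(1) by blast+
  then have "u = v" using u(1) v(1) by (auto simp: adjacent_def)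
  with u v show False by simp
qed

lemma path_aut_cases:
  assumes bij: "bij_betw \<sigma> {1..n} {1..n}"
    and adj: "\<forall>a\<in>{1..n}. \<forall>b\<in>{1..n}. adjacent (\<sigma> a) (\<sigma> b) \<longleftrightarrow> adjacent a b"
  shows "(\<forall>i\<in>{1..n}. \<sigma> i = i) \<or> (\<forall>i\<in>{1..n}. \<sigma> i = reflect n i)"
proof (cases "n = 0")
  case False
  then consider "\<sigma> 1 = 1" | "\<sigma> 1 = n" using path_aut_endpoint[OF bij adj] by force
  then show ?thesis
  proof cases
    case 1
    then show ?thesis using path_aut_fixing_1[OF bij adj] by blast
  next
    case 2
    let ?\<tau> = "reflect n \<circ> \<sigma>"
    have in_range: "\<And>i. i \<in> {1..n} \<Longrightarrow> \<sigma> i \<in> {1..n}" using bij_betwE[OF bij] by blast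
    have "bij_betw ?\<tau> {1..n} {1..n}" using bij_betw_trans[OF bij bij_betw_reflect] .
    moreover have "\<forall>a\<in>{1..n}. \<forall>b\<in>{1..n}. adjacent (?\<tau> a) (?\<tau> b) \<longleftrightarrow> adjacent a b"
    proof (intro ballI)
      fix a b assume "a \<in> {1..n}" "b \<in> {1..n}"
      moreover have "adjacent (reflect n x) (reflect n y) \<longleftrightarrow> adjacent x y"
        if "x \<in> {1..n}" "y \<in> {1..n}" for x y
        using that by (auto simp: adjacent_def)
      ultimately show "adjacent (?\<tau> a) (?\<tau> b) \<longleftrightarrow> adjacent a b"
        using adj in_range by simp
    qed
    moreover have "?\<tau> 1 = 1" using 2 False by simp
    ultimately have "\<forall>i\<in>{1..n}. ?\<tau> i = i" using path_aut_fixing_1 by blast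
    then show ?thesis using in_range by fastforce
  qed
qed simp

lemma fence_aut_cases:
  assumes aut: "is_aut {1..n} (fence_le lower n) \<sigma>"
  shows "(\<forall>i\<in>{1..n}. \<sigma> i = i) \<or> (\<forall>i\<in>{1..n}. \<sigma> i = reflect n i)"
proof (rule path_aut_cases)
  show bij: "bij_betw \<sigma> {1..n} {1..n}" using aut unfolding is_aut_def by blast
  have adjacent_iff: "adjacent a b \<longleftrightarrow> a \<noteq> b \<and> (fence_le lower n a b \<or> fence_le lower n b a)"
    if "a \<in> {1..n}" "b \<in> {1..n}" for a b
    using that by (auto simp: adjacent_def fence_le_iff)
  show "\<forall>a\<in>{1..n}. \<forall>b\<in>{1..n}. adjacent (\<sigma> a) (\<sigma> b) \<longleftrightarrow> adjacent a b"
  proof (intro ballI)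
    fix a b assume ab: "a \<in> {1..n}" "b \<in> {1..n}"
    then have "\<sigma> a \<in> {1..n}" "\<sigma> b \<in> {1..n}" "\<sigma> a = \<sigma> b \<longleftrightarrow> a = b"
      using bij_betwE[OF bij] inj_on_eq_iff[OF bij_betw_imp_inj_on[OF bij]] by auto
    then show "adjacent (\<sigma> a) (\<sigma> b) \<longleftrightarrow> adjacent a b"
      using adjacent_iff ab aut unfolding is_aut_def by metis
  qed
qed

lemma reflect_is_aut_odd_fence:
  assumes "odd n"
  shows "is_aut {1..n} (fence_le lower n) (reflect n)"
  unfolding is_aut_def
proof (intro conjI ballI bij_betw_reflect)
  fix a b assume ab: "a \<in> {1..n}" "b \<in> {1..n}"
  with assms have "odd (reflect n a) \<longleftrightarrow> odd a" by auto
  with ab show "fence_le lower n a b \<longleftrightarrow> fence_le lower n (reflect n a) (reflect n b)"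
    unfolding fence_le_iff by auto
qed

lemma even_fence_aut_id:
  assumes aut: "is_aut {1..n} (fence_le lower n) \<sigma>" and "even n" and "i \<in> {1..n}"
  shows "\<sigma> i = i"
proof (rule ccontr)
  assume "\<sigma> i \<noteq> i"
  with fence_aut_cases[OF aut] \<open>i \<in> {1..n}\<close>
  have is_reflection: "\<forall>i\<in>{1..n}. \<sigma> i = reflect n i" by blast
  have "2 \<le> n" using \<open>even n\<close> \<open>i \<in> {1..n}\<close> by (auto elim: evenE)
  then have "fence_le lower n 1 2 \<longleftrightarrow> fence_le lower n (\<sigma> 1) (\<sigma> 2)"
    using aut unfolding is_aut_def by auto
  with is_reflection \<open>2 \<le> n\<close> \<open>even n\<close> show False by (auto simp: fence_le_iff)
qed

lemma even_fence_not_locally_symmetric: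
  assumes "even n"
  shows "\<not> locally_symmetric {1..n} (fence_le lower n)"
  using even_fence_aut_id[OF _ assms] by (rule not_locally_symmetric_if_rigid)

lemma even_fence_flip_iso:
  assumes "even m"
  shows "poset_iso {1..m} (fence_le lower m) {1..m} (fence_le lower' m)"
proof (cases "lower' = lower")
  case False
  show ?thesis
    unfolding poset_iso_def
  proof (intro exI[of _ "reflect m"] conjI ballI bij_betw_reflect)
    fix a b assume ab: "a \<in> {1..m}" "b \<in> {1..m}"
    with assms have "odd (reflect m a) \<longleftrightarrow> even a" by auto
    with ab False show "fence_le lower m a b \<longleftrightarrow> fence_le lower' m (reflect m a) (reflect m b)"
      unfolding fence_le_iff by auto
  qed
qed (simp add: poset_iso_refl)

section \<open>Folding an odd fence\<close>

text \<open>A strictly ordered pair of a fence is a covering pair, so it is determined by its larger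
  element, which is never \<open>Min B\<close>.\<close>
lemma ord_pairs_fence_le_card:
  assumes "finite B" "B \<noteq> {}"
  shows "ord_pairs (fence_le lower n) B \<le> card B - 1"
proof -
  let ?P = "{(a, b). a \<in> B \<and> b \<in> B \<and> fence_le lower n a b \<and> a \<noteq> b}"
  have "inj_on (\<lambda>(a, b). max a b) ?P"
    by (rule inj_onI) (auto simp: fence_le_iff)
  moreover have "(\<lambda>(a, b). max a b) ` ?P \<subseteq> B - {Min B}"
  proof clarify
    fix a b assume "a \<in> B" "b \<in> B" "a \<noteq> b"
    moreover from this have "Min B \<le> a" "Min B \<le> b" using assms(1) by auto
    ultimately show "max a b \<in> B - {Min B}" by (auto simp: max_def)
  qed
  ultimately have "card ?P \<le> card (B - {Min B})"
    using assms by (intro card_inj_on_le) auto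
  also have "\<dots> = card B - 1" using assms by simp
  finally show ?thesis unfolding ord_pairs_def .
qed

lemma ord_pairs_fence_interval:
  assumes "1 \<le> p" "q \<le> n"
  shows "q - p \<le> ord_pairs (fence_le lower n) {p..q}"
proof -
  let ?le = "fence_le lower n"
  let ?P = "{(a, b). a \<in> {p..q} \<and> b \<in> {p..q} \<and> ?le a b \<and> a \<noteq> b}"
  let ?edge = "\<lambda>c. if ?le (c - 1) c then (c - 1, c) else (c, c - 1)"
  have "inj_on ?edge {Suc p..q}"
    by (rule inj_onI) (auto split: if_splits)
  moreover have "?edge ` {Suc p..q} \<subseteq> ?P"
    using assms by (auto simp: fence_le_iff)
  moreover have "finite ?P" by (rule finite_subset[of _ "{p..q} \<times> {p..q}"]) auto
  ultimately have "card {Suc p..q} \<le> card ?P" by (rule card_inj_on_le)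
  then show ?thesis unfolding ord_pairs_def by simp
qed

lemma max_ordered_fenceI:
  assumes "A \<subseteq> M" "finite M" "A \<noteq> {}" "card A - 1 \<le> ord_pairs (fence_le lower n) A"
  shows "max_ordered (fence_le lower n) M A"
  unfolding max_ordered_def
proof (intro conjI allI impI)
  fix B assume B: "B \<subseteq> M \<and> card B = card A"
  have "finite A" "finite B" using assms(1,2) B finite_subset by blast+
  with B assms(3) have "B \<noteq> {}" by auto
  with \<open>finite B\<close> have "ord_pairs (fence_le lower n) B \<le> card B - 1"
    by (rule ord_pairs_fence_le_card)
  with B assms(4) show "ord_pairs (fence_le lower n) B \<le> ord_pairs (fence_le lower n) A"
    by simp
qed (rule assms(1))

lemma fence_chain_subset:
  assumes "finite C" "is_chain (fence_le lower n) C"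
  shows "C \<subseteq> {Min C, Min C + 1}"
proof
  fix c assume "c \<in> C"
  then have "Min C \<in> C" "Min C \<le> c" using Min_in[OF assms(1)] Min_le[OF assms(1)] by blast+
  with assms \<open>c \<in> C\<close> show "c \<in> {Min C, Min C + 1}"
    unfolding is_chain_def fence_le_iff by fastforce
qed

lemma longest_chain_fence:
  assumes Y: "Y \<subseteq> {1..n}" "Y \<noteq> {}"
  shows "longest_chain (fence_le lower n) Y = (if \<exists>a\<in>Y. a + 1 \<in> Y then 2 else 1)"
proof -
  let ?S = "{card C | C. C \<subseteq> Y \<and> is_chain (fence_le lower n) C}"
  have finite_Y: "finite Y" using Y(1) finite_subset by blast
  have bounds: "x \<le> 2" "\<not> (\<exists>a\<in>Y. a + 1 \<in> Y) \<Longrightarrow> x \<le> 1" if x: "x \<in> ?S" for x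
  proof -
    obtain C where C: "x = card C" "C \<subseteq> Y" "is_chain (fence_le lower n) C"
      using x by blast
    then have "finite C" using finite_Y finite_subset by blast
    with C(3) have sub: "C \<subseteq> {Min C, Min C + 1}" by (intro fence_chain_subset)
    have "card C \<le> card {Min C, Min C + 1}" using sub by (rule card_mono[rotated]) simp
    then show "x \<le> 2" using C(1) by (simp add: card_insert_if)
    assume no_consecutive: "\<not> (\<exists>a\<in>Y. a + 1 \<in> Y)"
    have "C \<subseteq> {Min C}"
    proof
      fix c assume "c \<in> C"
      with \<open>finite C\<close> have "Min C \<in> C" using Min_in by blast
      with sub C(2) no_consecutive \<open>c \<in> C\<close> show "c \<in> {Min C}" by blast
    qed
    then have "card C \<le> card {Min C}" by (rule card_mono[rotated]) simp
    then show "x \<le> 1" using C(1) by simp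
  qed
  have "?S \<subseteq> {..2}"
  proof
    fix x assume "x \<in> ?S"
    then show "x \<in> {..2}" using bounds(1)[of x] by simp
  qed
  then have finite_S: "finite ?S" by (rule finite_subset) simp
  show ?thesis
  proof (cases "\<exists>a\<in>Y. a + 1 \<in> Y")
    case True
    then obtain a where a: "a \<in> Y" "a + 1 \<in> Y" by blast
    with Y(1) have "fence_le lower n a (a + 1) \<or> fence_le lower n (a + 1) a"
      by (auto simp: fence_le_iff)
    then have "is_chain (fence_le lower n) {a, a + 1}"
      unfolding is_chain_def by (auto simp: fence_le_iff)
    with a have "2 \<in> ?S" by (intro CollectI exI[of _ "{a, a + 1}"]) simp
    with True show ?thesis
      unfolding longest_chain_def using Max_eqI[OF finite_S bounds(1)] by simp
  next
    case False
    obtain a where "a \<in> Y" using Y(2) by blast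
    then have "1 \<in> ?S"
      by (intro CollectI exI[of _ "{a}"]) (simp add: is_chain_def fence_le_iff)
    with False show ?thesis
      unfolding longest_chain_def using Max_eqI[OF finite_S bounds(2)] by simp
  qed
qed

text \<open>The sets \<open>S\<^sub>0, S\<^sub>1\<close> of the generator: the halves of the \<open>(2k + 1)\<close>-fence on either side
  of the middle element \<open>k + 1\<close>, which the reflection exchanges.\<close>
definition fence_halves :: "nat \<Rightarrow> nat \<Rightarrow> nat set" where
  "fence_halves k i = (if i = 0 then {1..k} else {k + 2..2 * k + 1})"

lemma reflect_image_atLeastAtMost:
  assumes "1 \<le> a" "b \<le> n"
  shows "reflect n ` {a..b} = {reflect n b..reflect n a}"
proof
  show "{reflect n b..reflect n a} \<subseteq> reflect n ` {a..b}"
  proof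
    fix x assume "x \<in> {reflect n b..reflect n a}"
    with assms have "reflect n x \<in> {a..b}" "x = reflect n (reflect n x)" by auto
    then show "x \<in> reflect n ` {a..b}" by (rule rev_image_eqI)
  qed
qed (use assms in auto)

lemma moved_reflect_odd:
  assumes "n = 2 * k + 1"
  shows "moved {1..n} (reflect n) = {1..n} - {k + 1}"
  unfolding moved_def using assms by auto

lemma reflect_image_fence_halves:
  assumes "n = 2 * k + 1" "i < 2"
  shows "reflect n ` fence_halves k i = fence_halves k (Suc i mod 2)"
  using assms reflect_image_atLeastAtMost[of 1 k n] reflect_image_atLeastAtMost[of "k + 2" n n]
  by (auto simp: fence_halves_def less_2_cases_iff)

context
  fixes n k :: nat
  assumes n: "n = 2 * k + 1" and k: "1 \<le> k"
begin

lemma gen_family_fence_halves: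
  "gen_family {1..n} (fence_le lower n) (reflect n) 2 (fence_halves k) k"
proof -
  let ?M = "{1..n} - {k + 1}"
  have halves: "fence_halves k i \<subseteq> ?M" "card (fence_halves k i) = k"
    "fence_halves k i \<noteq> {}" for i
    using n k by (auto simp: fence_halves_def)
  have "max_ordered (fence_le lower n) ?M (fence_halves k i)" for i
  proof (rule max_ordered_fenceI)
    show "card (fence_halves k i) - 1 \<le> ord_pairs (fence_le lower n) (fence_halves k i)"
      using n k ord_pairs_fence_interval[of 1 k n lower] ord_pairs_fence_interval[of "k + 2" n n lower]
      by (auto simp: fence_halves_def)
  qed (use halves in auto)
  moreover have "longest_chain (fence_le lower n) (fence_halves k i) = longest_chain (fence_le lower n) ?M"
    for i
  proof -
    have "(\<exists>a\<in>fence_halves k i. a + 1 \<in> fence_halves k i) \<longleftrightarrow> 2 \<le> k"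
      "(\<exists>a\<in>?M. a + 1 \<in> ?M) \<longleftrightarrow> 2 \<le> k"
      using n by (auto simp: fence_halves_def intro: bexI[of _ 1] bexI[of _ "k + 2"])
    moreover have "?M \<noteq> {}" "?M \<subseteq> {1..n}" "fence_halves k i \<subseteq> {1..n}"
      using halves(1,3)[of i] by blast+
    ultimately show ?thesis using halves(3) by (simp add: longest_chain_fence)
  qed
  moreover have "(\<Union>i<2. fence_halves k i) = ?M"
    using n by (auto simp: fence_halves_def less_2_cases_iff)
  ultimately show ?thesis
    unfolding gen_family_def moved_reflect_odd[OF n]
    using halves reflect_image_fence_halves[OF n] by simp
qed

lemma reflect_is_generator_odd_fence:
  "is_generator {1..n} (fence_le lower n) {1..k} (fence_le lower n) 2 (reflect n) (fence_halves k)"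
proof -
  have aut: "is_aut {1..n} (fence_le lower n) (reflect n)"
    using n by (intro reflect_is_aut_odd_fence) simp
  have "poset_iso (fence_halves k i) (fence_le lower n) {1..k} (fence_le lower n)" if "i < 2" for i
  proof (cases "i = 0")
    case True
    then show ?thesis by (simp add: fence_halves_def poset_iso_refl)
  next
    case False
    with that have "i = 1" by simp
    then have "reflect n ` fence_halves k i = {1..k}"
      using reflect_image_fence_halves[OF n, of 1] by (simp add: fence_halves_def)
    moreover have "fence_halves k i \<subseteq> {1..n}" using n by (auto simp: fence_halves_def)
    ultimately show ?thesis using poset_iso_aut_image[OF aut] by metis
  qed
  moreover have "k \<le> k'" if "gen_family {1..n} (fence_le lower n) (reflect n) 2 T k'" for T k'
  proof -
    have "{..<2::nat} = {0, 1}" by auto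
    with that have "T 0 \<union> T 1 = {1..n} - {k + 1}" "card (T 0) = k'" "card (T 1) = k'"
      unfolding gen_family_def moved_reflect_odd[OF n] by auto
    then have "card ({1..n} - {k + 1}) \<le> k' + k'" by (metis card_Un_le)
    with n show ?thesis by simp
  qed
  ultimately show ?thesis
    unfolding is_generator_def using aut gen_family_fence_halves by auto
qed

lemma sym1_odd_fence_iff:
  "sym1 {1..n} (fence_le lower n) {1..k} (fence_le lower n) 2 a b
     \<longleftrightarrow> a \<in> {1..n} - {k + 1} \<and> b = reflect n a"
proof
  assume "sym1 {1..n} (fence_le lower n) {1..k} (fence_le lower n) 2 a b"
  then obtain \<sigma> q where aut: "is_aut {1..n} (fence_le lower n) \<sigma>" and a: "a \<in> moved {1..n} \<sigma>"
    and "1 \<le> q" "q < 2" "b = (\<sigma> ^^ q) a"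
    by (rule sym1_moved)
  then have b: "b = \<sigma> a" by (simp add: numeral_2_eq_2 le_less_Suc_eq)
  from a have "a \<in> {1..n}" "\<sigma> a \<noteq> a" by (auto simp: moved_def)
  with fence_aut_cases[OF aut] have "\<sigma> a = reflect n a" by blast
  with b \<open>a \<in> {1..n}\<close> \<open>\<sigma> a \<noteq> a\<close> n show "a \<in> {1..n} - {k + 1} \<and> b = reflect n a" by auto
next
  assume a: "a \<in> {1..n} - {k + 1} \<and> b = reflect n a"
  define i :: nat where "i = (if a \<le> k then 0 else 1)"
  have "i < 2" "Suc i mod 2 < 2" by (simp_all add: i_def)
  moreover have "a \<in> fence_halves k i" "a \<notin> fence_halves k (Suc i mod 2)"
    "b \<in> fence_halves k (Suc i mod 2)"
    using a n by (auto simp: i_def fence_halves_def)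
  ultimately show "sym1 {1..n} (fence_le lower n) {1..k} (fence_le lower n) 2 a b"
    unfolding sym1_def using reflect_is_generator_odd_fence a
    by (intro exI[of _ "reflect n"] exI[of _ "fence_halves k"] exI[of _ i] exI[of _ "Suc i mod 2"]
        exI[of _ 1]) auto
qed

lemma qsym_odd_fence_iff:
  "qsym {1..n} (fence_le lower n) {1..k} (fence_le lower n) 2 a b
     \<longleftrightarrow> b = a \<or> (a \<in> {1..n} \<and> b = reflect n a)"
proof -
  have "qsym {1..n} (fence_le lower n) {1..k} (fence_le lower n) 2 a b
      \<longleftrightarrow> b = a \<or> (a \<in> {1..n} - {k + 1} \<and> b = reflect n a)"
    unfolding qsym_def by (rule rtranclp_graph_involution[OF sym1_odd_fence_iff]) (use n in auto)
  with n show ?thesis by auto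
qed

lemma quot_carrier_odd_fence:
  "quot_carrier {1..n} (fence_le lower n) {1..k} (fence_le lower n) 2
     = (\<lambda>c. {c, reflect n c}) ` {1..k + 1}"
proof -
  have "quot_carrier {1..n} (fence_le lower n) {1..k} (fence_le lower n) 2
      = (\<lambda>a. {a, reflect n a}) ` {1..n}"
    unfolding quot_carrier_def qsym_odd_fence_iff by (intro image_cong) auto
  also have "\<dots> = (\<lambda>c. {c, reflect n c}) ` {1..k + 1}"
  proof
    show "(\<lambda>a. {a, reflect n a}) ` {1..n} \<subseteq> (\<lambda>c. {c, reflect n c}) ` {1..k + 1}"
    proof (rule image_subsetI)
      fix a assume "a \<in> {1..n}"
      show "{a, reflect n a} \<in> (\<lambda>c. {c, reflect n c}) ` {1..k + 1}"
      proof (cases "a \<le> k + 1")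
        case True
        with \<open>a \<in> {1..n}\<close> show ?thesis by auto
      next
        case False
        with \<open>a \<in> {1..n}\<close> n have "reflect n a \<in> {1..k + 1}"
          "{a, reflect n a} = {reflect n a, reflect n (reflect n a)}" by auto
        then show ?thesis by blast
      qed
    qed
  qed (use n in auto)
  finally show ?thesis .
qed

lemma fence_le_fold:
  assumes "c \<in> {1..k + 1}" "d \<in> {1..k + 1}"
  shows "fence_le lower (k + 1) c d
           \<longleftrightarrow> quot_le (fence_le lower n) {c, reflect n c} {d, reflect n d}"
  using assms n by (auto simp: quot_le_def fence_le_iff)

lemma odd_fence_quotient_iso:
  "poset_iso (quot_carrier {1..n} (fence_le lower n) {1..k} (fence_le lower n) 2)
     (quot_le (fence_le lower n)) {1..k + 1} (fence_le lower (k + 1))"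
proof -
  have "inj_on (\<lambda>c. {c, reflect n c}) {1..k + 1}"
    using n by (auto simp: inj_on_def doubleton_eq_iff)
  then have "bij_betw (\<lambda>c. {c, reflect n c}) {1..k + 1}
      (quot_carrier {1..n} (fence_le lower n) {1..k} (fence_le lower n) 2)"
    unfolding quot_carrier_odd_fence by (rule bij_betw_imageI) simp
  with fence_le_fold have "poset_iso {1..k + 1} (fence_le lower (k + 1))
      (quot_carrier {1..n} (fence_le lower n) {1..k} (fence_le lower n) 2) (quot_le (fence_le lower n))"
    unfolding poset_iso_def by blast
  then show ?thesis by (rule poset_iso_sym)
qed

end

lemma retract_step_odd_fence:
  assumes "n = 2 * k + 1" "1 \<le> k" "lower' = lower \<or> even (k + 1)"
  shows "retract_step (fence lower n) (fence lower' (k + 1))"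
proof -
  have "poset_iso {1..k + 1} (fence_le lower (k + 1)) {1..k + 1} (fence_le lower' (k + 1))"
  proof (cases "lower' = lower")
    case False
    with assms(3) have "even (k + 1)" by simp
    then show ?thesis by (rule even_fence_flip_iso)
  qed (simp add: poset_iso_refl)
  with odd_fence_quotient_iso[OF assms(1,2)]
  have "poset_iso (quot_carrier {1..n} (fence_le lower n) {1..k} (fence_le lower n) 2)
      (quot_le (fence_le lower n)) {1..k + 1} (fence_le lower' (k + 1))"
    by (rule poset_iso_trans)
  then show ?thesis
    unfolding retract_step_def fence_def using is_poset_fence_le by fastforce
qed

section \<open>The function \<open>f\<^sup>\<down>\<close>\<close>

lemma fstep_le: "fstep m \<le> m"
  unfolding fstep_def by presburger

lemma fdown_le: "fdown n \<le> n"
proof -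
  have "(fstep ^^ j) n \<le> n" for j
    by (induction j) (auto intro: order_trans[OF fstep_le])
  then show ?thesis unfolding fdown_def by blast
qed

lemma fstep_iterate_even_ex: "2 \<le> n \<Longrightarrow> \<exists>j. even ((fstep ^^ j) n)"
proof (induction n rule: less_induct)
  case (less n)
  show ?case
  proof (cases "even n")
    case True
    then show ?thesis by (intro exI[of _ 0]) simp
  next
    case False
    with less.prems have "2 \<le> fstep n" "fstep n < n" unfolding fstep_def by presburger+
    with less.IH obtain j where "even ((fstep ^^ j) (fstep n))" by blast
    then have "even ((fstep ^^ Suc j) n)" by (simp add: funpow_swap1)
    then show ?thesis by blast
  qed
qed

lemma fdown_even: "even n \<Longrightarrow> fdown n = n"
  unfolding fdown_def by (subst Least_eq_0) simp_all

lemma fdown_odd: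
  assumes "odd n" "3 \<le> n"
  shows "fdown n = fdown ((n + 1) div 2)"
proof -
  have step: "fstep n = (n + 1) div 2" using assms(1) by (simp add: fstep_def)
  have shift: "(fstep ^^ Suc i) n = (fstep ^^ i) (fstep n)" for i
    by (simp add: funpow_Suc_right del: funpow.simps)
  from assms step have "2 \<le> fstep n" by auto
  then obtain j where j: "even ((fstep ^^ j) (fstep n))" using fstep_iterate_even_ex by blast
  have "(LEAST i. even ((fstep ^^ i) n)) = Suc (LEAST i. even ((fstep ^^ Suc i) n))"
    by (rule Least_Suc[of _ "Suc j"]) (use j shift assms(1) in simp_all)
  then have least: "(LEAST i. even ((fstep ^^ i) n)) = Suc (LEAST i. even ((fstep ^^ i) (fstep n)))"
    by (simp only: shift)
  have "fdown n = (fstep ^^ Suc (LEAST i. even ((fstep ^^ i) (fstep n)))) n"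
    unfolding fdown_def least ..
  also have "\<dots> = fdown (fstep n)" unfolding fdown_def by (rule shift)
  finally show ?thesis unfolding step .
qed

lemma fdown_odd_less:
  assumes "odd n" "3 \<le> n"
  shows "fdown n < n"
proof -
  have "fdown n \<le> (n + 1) div 2" using fdown_odd[OF assms] fdown_le by metis
  also have "\<dots> < n" using assms(2) by simp
  finally show ?thesis .
qed

lemma odd_fence_retracts_to_fdown:
  "odd n \<Longrightarrow> 3 \<le> n \<Longrightarrow> retract_step\<^sup>+\<^sup>+ (fence lower n) (fence True (fdown n))"
proof (induction n arbitrary: lower rule: less_induct)
  case (less n)
  then obtain k where n: "n = 2 * k + 1" and k: "1 \<le> k" by (auto elim: oddE)
  with less.prems have fdown: "fdown n = fdown (k + 1)" using fdown_odd by simp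
  show ?case
  proof (cases "even (k + 1)")
    case True
    then have "retract_step (fence lower n) (fence True (k + 1))"
      by (intro retract_step_odd_fence[OF n k]) simp
    with fdown fdown_even[OF True] show ?thesis by auto
  next
    case False
    with k have "retract_step\<^sup>+\<^sup>+ (fence lower (k + 1)) (fence True (fdown (k + 1)))"
      using less.IH[of "k + 1"] n by auto
    moreover have "retract_step (fence lower n) (fence lower (k + 1))"
      by (intro retract_step_odd_fence[OF n k]) simp
    ultimately show ?thesis using fdown by (simp add: tranclp_into_tranclp2)
  qed
qed

theorem mainTheorem8:
  shows "(\<forall>n lower. even n \<longrightarrow> \<not> locally_symmetric (fst (fence lower n)) (snd (fence lower n)))
       \<and> (\<forall>n lower. odd n \<and> 3 \<le> n \<longrightarrow> retractable (fence lower n) (fence True (fdown n)))"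
proof (intro conjI allI impI)
  fix n :: nat and lower
  assume "even n"
  then show "\<not> locally_symmetric (fst (fence lower n)) (snd (fence lower n))"
    unfolding fence_def using even_fence_not_locally_symmetric by simp
next
  fix n :: nat and lower
  assume n: "odd n \<and> 3 \<le> n"
  then have "\<not> poset_iso {1..n} (fence_le lower n) {1..fdown n} (fence_le True (fdown n))"
    using fdown_odd_less poset_iso_card_eq by fastforce
  with n show "retractable (fence lower n) (fence True (fdown n))"
    unfolding retractable_def using odd_fence_retracts_to_fdown by (simp add: fence_def)
qed

end
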